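(* Let $q$ be an indeterminate (with square root $q^{1/2}$) and put $X_n=\frac{[n][n+1]}{q^n}$ for $n\geq 0$. For integers $k,m$ define the polynomials \begin{align*} c_{k,m}(q)&=h_{2m-k}(\{1,q^2\}^{k-m+1})+q\,h_{2m-k-1}(\{1,q^2\}^{k-m+1}),\\ g_{k,m}(q)&=h_{2m-k}(\{1\}^{k-m+1},\{q\}^{k-m})+h_{2m-k}(\{1\}^{k-m},\{q\}^{k-m+1}),\\ d_{k,m}(q)&=g_{k,m}(q^2)+q\,g_{k-1,m-1}(q^2). \end{align*} Then for all integers $m,l\geq1$, with all sums over integers $k\ge 0$ (only finitely many terms are nonzero): \begin{align*} X_l^{m+1}-X_{l-1}^{m+1}&=\sum_k h_{m-2k}(\{1,q\}^{k+1})\,[2l]\,[l]^{2(m-k)}q^{-l(m-k+1)},\\ \frac{1-q^{l+\frac12}}{(1-q^{\frac12})q^{\frac l2}}X_l^m-\frac{1-q^{l-\frac12}}{(1-q^{\frac12})q^{\frac{l-1}{2}}}X_{l-1}^m&=\sum_k c_{m,m-k}(q^{\frac12})\,[2l]\,[l]^{2(m-k)-1}q^{-l(m-k+\frac12)},\\ X_l^m+X_{l-1}^m&=\sum_k g_{m,m-k}(q)\,[l]^{2(m-k)}q^{-l(m-k)},\\ \frac{1-q^{l+\frac12}}{(1-q^{\frac12})q^{\frac l2}}X_l^{m-1}+\frac{1-q^{l-\frac12}}{(1-q^{\frac12})q^{\frac{l-1}{2}}}X_{l-1}^{m-1}&=\sum_k d_{m,m-k}(q^{\frac12})\,[l]^{2(m-k)-1}q^{-l(m-k-\frac12)}.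 \end{align*}
   Context: For an integer $k\ge0$, $[k]=\frac{1-q^k}{1-q}$. For integers $r,s\geq0$, $h_n(\{1\}^r,\{x\}^s)$ is defined by $\sum_{n\geq0}h_n(\{1\}^r,\{x\}^s)z^n=\frac{1}{(1-z)^r(1-xz)^s}$ (so $h_n=0$ for $n<0$), with the convention $h_n(\{1\}^r,\{x\}^s)=0$ if $r<0$ or $s<0$. One writes $h_n(\{1,x\}^r)$ for $h_n(\{1\}^r,\{x\}^r)$. The notation $c_{m,m-k}(q^{1/2})$ etc. means the polynomial $c_{m,m-k}$ evaluated at $q^{1/2}$. *)

theory Defs
  imports "HOL-Computational_Algebra.Formal_Power_Series"
begin

text \<open>Throughout, the variable s plays the role of q^(1/2), so q = s^2.\<close>

definition qint :: "'a::field \<Rightarrow> int \<Rightarrow> 'a" where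
  "qint s k = (1 - (s^2) powi k) / (1 - s^2)"

text \<open>h_n({1}^r,{x}^t): coefficient of z^n in 1/((1-z)^r (1-xz)^t);
  zero if n < 0, r < 0 or t < 0.\<close>
definition hh :: "int \<Rightarrow> int \<Rightarrow> int \<Rightarrow> 'a::field \<Rightarrow> 'a" where
  "hh n r t x = (if n < 0 \<or> r < 0 \<or> t < 0 then 0
     else fps_nth (inverse ((1 - fps_X) ^ nat r * (1 - fps_const x * fps_X) ^ nat t)) (nat n))"

definition hsym :: "int \<Rightarrow> int \<Rightarrow> 'a::field \<Rightarrow> 'a" where
  "hsym n r x = hh n r r x"

definition cpol :: "int \<Rightarrow> int \<Rightarrow> 'a::field \<Rightarrow> 'a" where
  "cpol k m t = hsym (2*m - k) (k - m + 1) (t^2) + t * hsym (2*m - k - 1) (k - m + 1) (t^2)"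

definition gpol :: "int \<Rightarrow> int \<Rightarrow> 'a::field \<Rightarrow> 'a" where
  "gpol k m t = hh (2*m - k) (k - m + 1) (k - m) t + hh (2*m - k) (k - m) (k - m + 1) t"

definition dpol :: "int \<Rightarrow> int \<Rightarrow> 'a::field \<Rightarrow> 'a" where
  "dpol k m t = gpol k m (t^2) + t * gpol (k - 1) (m - 1) (t^2)"

definition Xq :: "'a::field \<Rightarrow> int \<Rightarrow> 'a" where
  "Xq s n = qint s n * qint s (n + 1) / (s^2) powi n"

end

theory Submission
  imports Defs
begin

text \<open>
  Put Y = [l]^2 / q^l. Then X_l and X_(l-1) are the two roots of T^2 - (1 + q) Y T + (q Y^2 - Y),
  so every combination a X_l^n + b X_(l-1)^n is a combination of two consecutive terms of the
  Lucas sequence U_n of this quadratic. Moreover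
  U_(m+1) = sum_j h_(2j-m)({1,q}^(m-j+1)) Y^j, because both sides obey the same second order
  recurrence: on the coefficients it is the recurrence of complete homogeneous symmetric
  functions obtained by multiplying their generating function by (1 - z)(1 - q z).
  The polynomials c, g and d are the coefficient sequences produced by the weights occurring
  in the four identities, and the factors [l]^e q^(-l e/2) are the powers of Z = [l] / q^(l/2),
  a square root of Y.
\<close>

unbundle fps_syntax

lemma fps_nth_inverse_eq_factor:
  fixes F :: "'a::field fps" and a :: 'a
  defines "G \<equiv> inverse ((1 - fps_const a * fps_X) * F)"
  shows "inverse F $ n = G $ n - (if n = 0 then 0 else a * G $ (n - 1))"
proof -
  have "(1 - fps_const a * fps_X) * inverse (1 - fps_const a * fps_X) = 1"
    by (simp add: inverse_mult_eq_1')
  then have "(1 - fps_const a * fps_X) * G = inverse F"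
    by (simp add: G_def fps_inverse_mult mult.assoc [symmetric])
  then have "inverse F = G - fps_const a * (fps_X * G)"
    by (simp add: algebra_simps)
  then show ?thesis
    by simp
qed

lemma hh_neg [simp]: "n < 0 \<Longrightarrow> hh n r t x = 0"
  by (simp add: hh_def)

lemma hh_rec_ones:
  assumes "r \<ge> 0" "t \<ge> 0"
  shows "hh n r t (x::'a::field) = hh n (r + 1) t x - hh (n - 1) (r + 1) t x"
proof (cases "n < 0")
  case False
  have "nat (r + 1) = Suc (nat r)"
    using assms by simp
  then show ?thesis
    using False assms fps_nth_inverse_eq_factor[where a = 1 and n = "nat n"
        and F = "(1 - fps_X) ^ nat r * (1 - fps_const x * fps_X) ^ nat t"]
    by (auto simp: hh_def mult.assoc nat_diff_distrib')
qed simp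

lemma hh_rec_xs:
  assumes "r \<ge> 0" "t \<ge> 0"
  shows "hh n r t (x::'a::field) = hh n r (t + 1) x - x * hh (n - 1) r (t + 1) x"
proof (cases "n < 0")
  case False
  have "nat (t + 1) = Suc (nat t)"
    using assms by simp
  then show ?thesis
    using False assms fps_nth_inverse_eq_factor[where a = x and n = "nat n"
        and F = "(1 - fps_X) ^ nat r * (1 - fps_const x * fps_X) ^ nat t"]
    by (auto simp: hh_def mult_ac nat_diff_distrib')
qed simp

lemma hsym_neg [simp]: "n < 0 \<Longrightarrow> hsym n r x = 0"
  by (simp add: hsym_def)

lemma hsym_zero_arity: "hsym n 0 x = (if n = 0 then 1 else 0)"
  by (simp add: hsym_def hh_def)

lemma hsym_rec:
  assumes "r \<ge> 0"
  shows "hsym n r (x::'a::field) =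
    hsym n (r + 1) x - (1 + x) * hsym (n - 1) (r + 1) x + x * hsym (n - 2) (r + 1) x"
proof -
  have xs: "hh k (r + 1) r x = hsym k (r + 1) x - x * hsym (k - 1) (r + 1) x" for k
    using hh_rec_xs[of "r + 1" r k x] assms by (simp add: hsym_def)
  have "hsym n r x = hh n (r + 1) r x - hh (n - 1) (r + 1) r x"
    using hh_rec_ones[of r r n x] assms by (simp add: hsym_def)
  also have "\<dots> = hsym n (r + 1) x - (1 + x) * hsym (n - 1) (r + 1) x + x * hsym (n - 2) (r + 1) x"
    unfolding xs by (simp add: algebra_simps)
  finally show ?thesis .
qed

definition lucas_coeff :: "'a::field \<Rightarrow> int \<Rightarrow> int \<Rightarrow> 'a" where
  "lucas_coeff q m j = hsym (2 * j - m) (m - j + 1) q"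

lemma lucas_coeff_below [simp]: "2 * j < m \<Longrightarrow> lucas_coeff q m j = 0"
  by (simp add: lucas_coeff_def)

lemma lucas_coeff_above: "m \<ge> 0 \<Longrightarrow> lucas_coeff q m (m + 1) = 0"
  by (simp add: lucas_coeff_def hsym_zero_arity)

lemma lucas_coeff_rec:
  assumes "m \<ge> 0" "j \<le> m + 2"
  shows "lucas_coeff q (m + 2) j =
    lucas_coeff q m (j - 1) + (1 + q) * lucas_coeff q (m + 1) (j - 1) - q * lucas_coeff q m (j - 2)"
  using hsym_rec[of "m - j + 2" "2 * j - m - 2" q] assms
  by (simp add: lucas_coeff_def algebra_simps)

lemma sum_atMost_Suc_shift_pred:
  fixes Y :: "'a::comm_semiring_1"
  shows "(\<Sum>j\<le>Suc n. f (int j - 1) * Y ^ j) = f (- 1) + Y * (\<Sum>j\<le>n. f (int j) * Y ^ j)"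
  by (subst sum.atMost_Suc_shift) (simp add: sum_distrib_left mult.left_commute)

definition lucas_poly :: "'a::field \<Rightarrow> 'a \<Rightarrow> nat \<Rightarrow> 'a" where
  "lucas_poly q Y m = (\<Sum>j\<le>m. lucas_coeff q (int m) (int j) * Y ^ j)"

lemma lucas_poly_extend: "(\<Sum>j\<le>Suc m. lucas_coeff q (int m) (int j) * Y ^ j) = lucas_poly q Y m"
  using lucas_coeff_above[of "int m" q] by (simp add: lucas_poly_def add.commute)

lemma lucas_poly_rec:
  "lucas_poly q Y (Suc (Suc m)) = (1 + q) * Y * lucas_poly q Y (Suc m) - (q * Y ^ 2 - Y) * lucas_poly q Y m"
proof -
  let ?c = "lucas_coeff q"
  have shift1: "(\<Sum>j\<le>Suc (Suc m). ?c (int m) (int j - 1) * Y ^ j) = Y * lucas_poly q Y m"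
    using sum_atMost_Suc_shift_pred[of "?c (int m)" Y "Suc m"]
    by (simp add: lucas_poly_extend del: sum.atMost_Suc)
  have shift2: "(\<Sum>j\<le>Suc (Suc m). ?c (int m) (int j - 2) * Y ^ j) = Y\<^sup>2 * lucas_poly q Y m"
  proof -
    have "(\<Sum>j\<le>Suc (Suc m). ?c (int m) (int j - 2) * Y ^ j)
        = Y * (\<Sum>j\<le>Suc m. ?c (int m) (int j - 1) * Y ^ j)"
      using sum_atMost_Suc_shift_pred[of "\<lambda>i. ?c (int m) (i - 1)" Y "Suc m"]
      by (simp add: diff_diff_eq del: sum.atMost_Suc)
    also have "\<dots> = Y\<^sup>2 * lucas_poly q Y m"
      using sum_atMost_Suc_shift_pred[of "?c (int m)" Y m]
      by (simp add: lucas_poly_def power2_eq_square del: sum.atMost_Suc)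
    finally show ?thesis .
  qed
  have shift3: "(\<Sum>j\<le>Suc (Suc m). ?c (int (Suc m)) (int j - 1) * Y ^ j) = Y * lucas_poly q Y (Suc m)"
    using sum_atMost_Suc_shift_pred[of "?c (int (Suc m))" Y "Suc m"]
    by (simp add: lucas_poly_def del: sum.atMost_Suc)
  have "lucas_poly q Y (Suc (Suc m)) = (\<Sum>j\<le>Suc (Suc m).
      (?c (int m) (int j - 1) + (1 + q) * ?c (int (Suc m)) (int j - 1) - q * ?c (int m) (int j - 2))
      * Y ^ j)"
    unfolding lucas_poly_def
    by (intro sum.cong refl) (simp add: lucas_coeff_rec[of "int m" "int _", simplified] add.commute)
  also have "\<dots> = Y * lucas_poly q Y m + (1 + q) * (Y * lucas_poly q Y (Suc m))
      - q * (Y\<^sup>2 * lucas_poly q Y m)"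
    unfolding shift1 [symmetric] shift2 [symmetric] shift3 [symmetric]
    by (simp only: distrib_right left_diff_distrib sum.distrib sum_subtractf sum_distrib_left mult.assoc)
  finally show ?thesis
    by (simp add: algebra_simps)
qed

fun lucas_U :: "'a::comm_ring_1 \<Rightarrow> 'a \<Rightarrow> nat \<Rightarrow> 'a" where
  "lucas_U p q 0 = 0"
| "lucas_U p q (Suc 0) = 1"
| "lucas_U p q (Suc (Suc n)) = p * lucas_U p q (Suc n) - q * lucas_U p q n"

lemma lucas_U_combination:
  fixes \<alpha> \<beta> a b :: "'a::comm_ring_1"
  assumes "p = \<alpha> + \<beta>" and "q = \<alpha> * \<beta>"
  shows "a * \<alpha> ^ n + b * \<beta> ^ n
    = (a + b) * lucas_U p q (Suc n) - (a * \<beta> + b * \<alpha>) * lucas_U p q n"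
  using assms
proof (induction p q n rule: lucas_U.induct)
  case (3 p q n)
  let ?U = "lucas_U p q"
  have "a * \<alpha> ^ Suc (Suc n) + b * \<beta> ^ Suc (Suc n)
      = p * (a * \<alpha> ^ Suc n + b * \<beta> ^ Suc n) - q * (a * \<alpha> ^ n + b * \<beta> ^ n)"
    using "3.prems" by (simp add: algebra_simps)
  also have "\<dots> = p * ((a + b) * ?U (Suc (Suc n)) - (a * \<beta> + b * \<alpha>) * ?U (Suc n))
      - q * ((a + b) * ?U (Suc n) - (a * \<beta> + b * \<alpha>) * ?U n)"
    using "3.IH"[OF "3.prems"] by simp
  also have "\<dots> = (a + b) * ?U (Suc (Suc (Suc n))) - (a * \<beta> + b * \<alpha>) * ?U (Suc (Suc n))"
    by (simp add: algebra_simps)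
  finally show ?case .
qed (simp_all add: algebra_simps)

lemma lucas_U_eq_lucas_poly: "lucas_U ((1 + q) * Y) (q * Y ^ 2 - Y) (Suc m) = lucas_poly q Y m"
proof -
  have "lucas_U ((1 + q) * Y) (q * Y ^ 2 - Y) (Suc m) = lucas_poly q Y m
      \<and> lucas_U ((1 + q) * Y) (q * Y ^ 2 - Y) (Suc (Suc m)) = lucas_poly q Y (Suc m)"
  proof (induction m)
    case 0
    show ?case
      using hsym_rec[of 0 0 q] hsym_rec[of 0 1 q]
      by (simp add: lucas_poly_def lucas_coeff_def hsym_zero_arity)
  next
    case (Suc m)
    let ?U = "lucas_U ((1 + q) * Y) (q * Y ^ 2 - Y)"
    have "?U (Suc (Suc (Suc m))) = (1 + q) * Y * ?U (Suc (Suc m)) - (q * Y ^ 2 - Y) * ?U (Suc m)"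
      by (rule lucas_U.simps(3))
    with Suc.IH show ?case
      by (simp add: lucas_poly_rec del: lucas_U.simps)
  qed
  then show ?thesis ..
qed

lemma sum_lucas_coeff_pred:
  "(\<Sum>j\<le>m. lucas_coeff q (int m - 1) (int j - 1) * Y ^ j)
    = Y * lucas_U ((1 + q) * Y) (q * Y ^ 2 - Y) m"
proof (cases m)
  case (Suc n)
  then show ?thesis
    using sum_atMost_Suc_shift_pred[of "lucas_coeff q (int n)" Y n]
    by (simp add: lucas_U_eq_lucas_poly lucas_poly_def del: sum.atMost_Suc lucas_U.simps)
qed simp

lemma gpol_eq_lucas_coeff:
  assumes "j \<le> m"
  shows "gpol m j x = 2 * lucas_coeff x m j - (1 + x) * lucas_coeff x (m - 1) (j - 1)"
  using hh_rec_xs[of "m - j + 1" "m - j" "2 * j - m" x] hh_rec_ones[of "m - j" "m - j + 1" "2 * j - m" x]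
    assms
  by (simp add: gpol_def lucas_coeff_def hsym_def algebra_simps)

lemma cpol_eq_lucas_coeff:
  "cpol m j s = lucas_coeff (s ^ 2) m j + s * lucas_coeff (s ^ 2) (m - 1) (j - 1)"
  by (simp add: cpol_def lucas_coeff_def hsym_def algebra_simps)

lemma sum_gpol:
  "(\<Sum>j\<le>m. gpol (int m) (int j) q * Y ^ j)
    = 2 * lucas_U ((1 + q) * Y) (q * Y ^ 2 - Y) (Suc m)
      - (1 + q) * Y * lucas_U ((1 + q) * Y) (q * Y ^ 2 - Y) m"
proof -
  have "(\<Sum>j\<le>m. gpol (int m) (int j) q * Y ^ j)
      = 2 * (\<Sum>j\<le>m. lucas_coeff q (int m) (int j) * Y ^ j)
      - (1 + q) * (\<Sum>j\<le>m. lucas_coeff q (int m - 1) (int j - 1) * Y ^ j)"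
    by (simp add: gpol_eq_lucas_coeff sum_distrib_left sum_subtractf algebra_simps)
  then show ?thesis
    by (simp add: sum_lucas_coeff_pred lucas_U_eq_lucas_poly lucas_poly_def del: lucas_U.simps)
qed

lemma sum_cpol:
  "(\<Sum>j\<le>m. cpol (int m) (int j) s * Y ^ j)
    = lucas_U ((1 + s\<^sup>2) * Y) (s\<^sup>2 * Y ^ 2 - Y) (Suc m)
      + s * Y * lucas_U ((1 + s\<^sup>2) * Y) (s\<^sup>2 * Y ^ 2 - Y) m"
proof -
  have "(\<Sum>j\<le>m. cpol (int m) (int j) s * Y ^ j)
      = (\<Sum>j\<le>m. lucas_coeff (s\<^sup>2) (int m) (int j) * Y ^ j)
      + s * (\<Sum>j\<le>m. lucas_coeff (s\<^sup>2) (int m - 1) (int j - 1) * Y ^ j)"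
    by (simp add: cpol_eq_lucas_coeff sum_distrib_left sum.distrib algebra_simps)
  then show ?thesis
    by (simp add: sum_lucas_coeff_pred lucas_U_eq_lucas_poly lucas_poly_def mult.assoc
        del: lucas_U.simps)
qed

lemma sum_dpol:
  "(\<Sum>j\<le>Suc n. dpol (int (Suc n)) (int j) s * Y ^ j)
    = (\<Sum>j\<le>Suc n. gpol (int (Suc n)) (int j) (s\<^sup>2) * Y ^ j)
      + s * Y * (\<Sum>j\<le>n. gpol (int n) (int j) (s\<^sup>2) * Y ^ j)"
proof -
  have "(\<Sum>j\<le>Suc n. dpol (int (Suc n)) (int j) s * Y ^ j)
      = (\<Sum>j\<le>Suc n. gpol (int (Suc n)) (int j) (s\<^sup>2) * Y ^ j)
        + s * (\<Sum>j\<le>Suc n. gpol (int n) (int j - 1) (s\<^sup>2) * Y ^ j)"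
    by (simp add: dpol_def distrib_right sum.distrib sum_distrib_left mult.assoc del: sum.atMost_Suc)
  also have "(\<Sum>j\<le>Suc n. gpol (int n) (int j - 1) (s\<^sup>2) * Y ^ j)
      = Y * (\<Sum>j\<le>n. gpol (int n) (int j) (s\<^sup>2) * Y ^ j)"
    using sum_atMost_Suc_shift_pred[of "\<lambda>i. gpol (int n) i (s\<^sup>2)" Y n]
    by (simp add: gpol_def del: sum.atMost_Suc)
  finally show ?thesis
    by (simp only: mult.assoc)
qed

lemma qint_double: "qint s (2 * k) = qint s k * (1 + (s\<^sup>2) powi k)"
proof -
  have "(s\<^sup>2) powi (2 * k) = ((s\<^sup>2) powi k)\<^sup>2"
    using power_int_mult[of "s\<^sup>2" k 2] by (simp add: mult.commute)
  then show ?thesis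
    by (simp add: qint_def power2_eq_square algebra_simps flip: add_divide_distrib diff_divide_distrib)
qed

lemma qint_succ:
  assumes "s \<noteq> 0" and "s\<^sup>2 \<noteq> 1"
  shows "qint s (k + 1) = 1 + s\<^sup>2 * qint s k"
proof -
  have "(s\<^sup>2) powi (k + 1) = s\<^sup>2 * (s\<^sup>2) powi k"
    using assms(1) by (simp add: power_int_add_1')
  moreover have "1 - s\<^sup>2 \<noteq> 0"
    using assms(2) by simp
  ultimately show ?thesis
    by (simp add: qint_def field_simps)
qed

text \<open>
  Here A stands for [l] and w for q^(l/2); the only relation between them that is needed is
  (1 - q) [l] = 1 - q^l.
\<close>

lemma root_pair_identities:
  fixes s w A :: "'a::field"
  assumes "w \<noteq> 0" and "s \<noteq> 1" and hA: "(1 - s\<^sup>2) * A = 1 - w\<^sup>2"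
  defines "P \<equiv> A * (1 + s\<^sup>2 * A) / w\<^sup>2" and "M \<equiv> (A - 1) * A / w\<^sup>2" and "Z \<equiv> A / w"
    and "F\<^sub>1 \<equiv> (1 - s * w\<^sup>2) / ((1 - s) * w)" and "F\<^sub>0 \<equiv> (s - w\<^sup>2) / ((1 - s) * w)"
    and "K \<equiv> (1 + w\<^sup>2) / w"
  shows "P + M = (1 + s\<^sup>2) * Z\<^sup>2" and "P * M = s\<^sup>2 * (Z\<^sup>2)\<^sup>2 - Z\<^sup>2" and "P - M = Z * K"
    and "F\<^sub>1 - F\<^sub>0 = K" and "F\<^sub>1 * M - F\<^sub>0 * P = - (K * s * Z\<^sup>2)"
    and "Z * F\<^sub>1 = P + s * Z\<^sup>2" and "Z * F\<^sub>0 = M + s * Z\<^sup>2" and "F\<^sub>1 + F\<^sub>0 = (1 + s)\<^sup>2 * Z"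
proof -
  have "1 - s \<noteq> 0"
    using assms(2) by simp
  note nz = assms(1) this
  show "P + M = (1 + s\<^sup>2) * Z\<^sup>2"
    unfolding P_def M_def Z_def using nz by (simp add: field_simps) algebra
  show "P * M = s\<^sup>2 * (Z\<^sup>2)\<^sup>2 - Z\<^sup>2"
    unfolding P_def M_def Z_def using nz by (simp add: field_simps) (use hA in algebra)
  show "P - M = Z * K"
    unfolding P_def M_def Z_def K_def using nz by (simp add: field_simps) (use hA in algebra)
  show "F\<^sub>1 - F\<^sub>0 = K"
    unfolding F\<^sub>1_def F\<^sub>0_def K_def diff_divide_distrib [symmetric] using nz by (simp add: field_simps)
  show "F\<^sub>1 * M - F\<^sub>0 * P = - (K * s * Z\<^sup>2)"
    unfolding P_def M_def Z_def F\<^sub>1_def F\<^sub>0_def K_def times_divide_times_eq diff_divide_distrib [symmetric]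
    using nz by (simp add: field_simps) (use hA in algebra)
  show "Z * F\<^sub>1 = P + s * Z\<^sup>2"
    unfolding P_def Z_def F\<^sub>1_def using nz by (simp add: field_simps) (use hA in algebra)
  show "Z * F\<^sub>0 = M + s * Z\<^sup>2"
    unfolding M_def Z_def F\<^sub>0_def using nz by (simp add: field_simps) (use hA in algebra)
  show "F\<^sub>1 + F\<^sub>0 = (1 + s)\<^sup>2 * Z"
    unfolding Z_def F\<^sub>1_def F\<^sub>0_def add_divide_distrib [symmetric]
    using nz by (simp add: field_simps) (use hA in algebra)
qed

lemma Xq_relations:
  fixes s :: "'a::field"
  assumes "s \<noteq> 0" and "s\<^sup>2 \<noteq> 1" and "l \<ge> 1"
  defines "P \<equiv> Xq s (int l)" and "M \<equiv> Xq s (int l - 1)" and "Z \<equiv> qint s (int l) / s ^ l"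
    and "F\<^sub>1 \<equiv> (1 - s ^ (2 * l + 1)) / ((1 - s) * s ^ l)"
    and "F\<^sub>0 \<equiv> (1 - s ^ (2 * l - 1)) / ((1 - s) * s ^ (l - 1))"
    and "K \<equiv> (1 + s ^ (2 * l)) / s ^ l"
  shows "P + M = (1 + s\<^sup>2) * Z\<^sup>2" and "P * M = s\<^sup>2 * (Z\<^sup>2)\<^sup>2 - Z\<^sup>2" and "P - M = Z * K"
    and "F\<^sub>1 - F\<^sub>0 = K" and "F\<^sub>1 * M - F\<^sub>0 * P = - (K * s * Z\<^sup>2)"
    and "Z * F\<^sub>1 = P + s * Z\<^sup>2" and "Z * F\<^sub>0 = M + s * Z\<^sup>2" and "F\<^sub>1 + F\<^sub>0 = (1 + s)\<^sup>2 * Z"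
proof -
  define A where "A = qint s (int l)"
  define w where "w = s ^ l"
  have w: "w \<noteq> 0"
    using assms(1) by (simp add: w_def)
  have s1: "s \<noteq> 1"
    using assms(2) by auto
  obtain n where l: "l = Suc n"
    using assms(3) by (cases l) auto
  have pow: "s ^ (2 * l) = w\<^sup>2" "s ^ (2 * l + 1) = s * w\<^sup>2" "s ^ (2 * l - 1) = w\<^sup>2 / s"
      "s ^ (l - 1) = w / s" "(s\<^sup>2) ^ l = w\<^sup>2" "(s\<^sup>2) powi (int l - 1) = w\<^sup>2 / s\<^sup>2"
  proof -
    show "s ^ (2 * l) = w\<^sup>2" "s ^ (2 * l + 1) = s * w\<^sup>2" "(s\<^sup>2) ^ l = w\<^sup>2"
      by (simp_all add: w_def mult.commute flip: power_mult)
    show "s ^ (2 * l - 1) = w\<^sup>2 / s" "s ^ (l - 1) = w / s"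
      using assms(1) by (simp_all add: l w_def field_simps power2_eq_square mult_2_right flip: power_add)
    show "(s\<^sup>2) powi (int l - 1) = w\<^sup>2 / s\<^sup>2"
      using assms(1) by (simp add: power_int_diff w_def mult.commute flip: power_mult)
  qed
  have hA: "(1 - s\<^sup>2) * A = 1 - w\<^sup>2"
    using assms(2) pow(5) by (simp add: A_def qint_def)
  have "P = A * (1 + s\<^sup>2 * A) / w\<^sup>2"
    using qint_succ[OF assms(1,2), of "int l"] by (simp add: P_def Xq_def A_def pow)
  moreover have "A = 1 + s\<^sup>2 * qint s (int l - 1)"
    using qint_succ[OF assms(1,2), of "int l - 1"] by (simp add: A_def)
  then have "M = (A - 1) * A / w\<^sup>2"
    using assms(1) by (simp add: M_def Xq_def A_def pow field_simps)
  moreover have "F\<^sub>1 = (1 - s * w\<^sup>2) / ((1 - s) * w)" "F\<^sub>0 = (s - w\<^sup>2) / ((1 - s) * w)"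
    unfolding F\<^sub>1_def F\<^sub>0_def pow w_def [symmetric] using assms(1) w s1 by (simp_all add: field_simps)
  moreover have "Z = A / w" "K = (1 + w\<^sup>2) / w"
    by (simp_all add: Z_def K_def A_def w_def pow)
  ultimately show "P + M = (1 + s\<^sup>2) * Z\<^sup>2" and "P * M = s\<^sup>2 * (Z\<^sup>2)\<^sup>2 - Z\<^sup>2" and "P - M = Z * K"
    and "F\<^sub>1 - F\<^sub>0 = K" and "F\<^sub>1 * M - F\<^sub>0 * P = - (K * s * Z\<^sup>2)"
    and "Z * F\<^sub>1 = P + s * Z\<^sup>2" and "Z * F\<^sub>0 = M + s * Z\<^sup>2" and "F\<^sub>1 + F\<^sub>0 = (1 + s)\<^sup>2 * Z"
    using root_pair_identities[OF w s1 hA] by simp_all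
qed

lemma Xq_diff:
  fixes s :: "'a::field"
  assumes "s \<noteq> 0" and "s\<^sup>2 \<noteq> 1" and "l \<ge> 1"
  shows "Xq s (int l) - Xq s (int l - 1) = qint s (2 * int l) / s ^ (2 * l)"
proof -
  have "s ^ (2 * l) = s ^ l * s ^ l"
    by (simp add: mult_2 power_add)
  with Xq_relations(3)[OF assms] show ?thesis
    by (simp add: qint_double power_mult)
qed

lemma sum_int_atLeastAtMost_reflect: "(\<Sum>k\<in>{0..int m}. f k) = (\<Sum>j\<le>m. f (int m - int j))"
  by (rule sum.reindex_bij_witness[where j = "\<lambda>k. nat (int m - k)" and i = "\<lambda>j. int m - int j"]) auto

lemma power_int_scale:
  fixes A s :: "'a::field"
  assumes "s \<noteq> 0"
  shows "A powi e * s powi (- (int l * (e + c))) = (A / s ^ l) powi e * (s ^ l) powi (- c)"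
proof -
  have "s powi (- (int l * (e + c))) = (s ^ l) powi (- e + - c)"
    using power_int_mult[of s "int l" "- e + - c"] by (simp add: algebra_simps)
  also have "\<dots> = (s ^ l) powi (- e) * (s ^ l) powi (- c)"
    using power_int_add[of "s ^ l" "- e" "- c"] assms by simp
  moreover have "A powi e * (s ^ l) powi (- e) = (A / s ^ l) powi e"
    by (simp add: power_int_divide_distrib power_int_minus_divide)
  ultimately show ?thesis
    by (simp add: mult.assoc [symmetric])
qed

lemma power_int_double:
  fixes x :: "'a::division_ring"
  shows "x powi (2 * int j) = (x\<^sup>2) ^ j"
proof -
  have "x powi (2 * int j) = x ^ (2 * j)"
    by (metis power_int_of_nat of_nat_mult of_nat_numeral)
  then show ?thesis
    by (simp only: power_mult)
qed

lemma sum_reflect_power_int_even: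
  fixes A s :: "'a::field"
  assumes "s \<noteq> 0"
  shows "(\<Sum>k\<in>{0..int m}. f (int m - k) * A powi (2 * (int m - k))
        * s powi (- int l * (2 * (int m - k) + c)))
    = (\<Sum>j\<le>m. f (int j) * ((A / s ^ l)\<^sup>2) ^ j) * (s ^ l) powi (- c)"
  unfolding sum_int_atLeastAtMost_reflect sum_distrib_right
  by (simp add: mult.assoc power_int_scale [OF assms]) (simp add: power_int_double)

lemma sum_reflect_power_int_odd:
  fixes A s :: "'a::field"
  assumes "s \<noteq> 0"
  shows "(\<Sum>k\<in>{0..int m}. f (int m - k) * A powi (2 * (int m - k) - 1)
        * s powi (- int l * (2 * (int m - k) - 1 + c)))
    = (\<Sum>j\<le>m. f (int j) * (A / s ^ l) powi (2 * int j - 1)) * (s ^ l) powi (- c)"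
  unfolding sum_int_atLeastAtMost_reflect sum_distrib_right
  by (simp add: mult.assoc power_int_scale [OF assms])

lemma sum_power_int_odd_times:
  fixes Z :: "'a::field"
  assumes "f 0 = 0"
  shows "Z * (\<Sum>j\<le>m. f (int j) * Z powi (2 * int j - 1)) = (\<Sum>j\<le>m. f (int j) * (Z\<^sup>2) ^ j)"
  unfolding sum_distrib_left
proof (intro sum.cong refl)
  fix j
  show "Z * (f (int j) * Z powi (2 * int j - 1)) = f (int j) * (Z\<^sup>2) ^ j"
  proof (cases "j = 0")
    case False
    then have "Z * Z powi (2 * int j - 1) = (Z\<^sup>2) ^ j"
      using power_int_add_1'[of Z "2 * int j - 1"] by (simp add: power_int_double)
    then show ?thesis
      by (simp add: mult.left_commute)
  qed (simp add: assms)
qed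

lemma power_int_minus_two_power:
  fixes s :: "'a::field"
  shows "(s ^ l) powi (- 2) = 1 / s ^ (2 * l)"
proof -
  have "(s ^ l) powi (- 2) = 1 / (s ^ l)\<^sup>2"
    using power_int_minus_divide[of "s ^ l" 2] by simp
  then show ?thesis
    by (simp add: mult.commute flip: power_mult)
qed

lemma power_diff_eq_lucas_poly:
  fixes \<alpha> \<beta> :: "'a::field"
  assumes "\<alpha> + \<beta> = (1 + q) * Y" and "\<alpha> * \<beta> = q * Y\<^sup>2 - Y"
  shows "\<alpha> ^ Suc n - \<beta> ^ Suc n = (\<alpha> - \<beta>) * lucas_poly q Y n"
proof -
  have "\<alpha> ^ Suc n - \<beta> ^ Suc n = (\<alpha> - \<beta>) * lucas_U ((1 + q) * Y) (q * Y\<^sup>2 - Y) (Suc n)"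
    using lucas_U_combination[where \<alpha> = \<alpha> and \<beta> = \<beta> and a = \<alpha> and b = "- \<beta>" and n = n,
        OF assms [symmetric]]
    by (simp add: algebra_simps del: lucas_U.simps)
  then show ?thesis
    by (simp only: lucas_U_eq_lucas_poly)
qed

lemma Xq_power_diff_expansion:
  fixes s :: "'a::field" and m l :: nat
  assumes "s \<noteq> 0" and "s\<^sup>2 \<noteq> 1" and "l \<ge> 1"
  shows "Xq s (int l) ^ (m + 1) - Xq s (int l - 1) ^ (m + 1)
    = (\<Sum>k\<in>{0..int m}. hsym (int m - 2 * k) (k + 1) (s\<^sup>2) * qint s (2 * int l)
        * qint s (int l) powi (2 * (int m - k)) * s powi (- 2 * int l * (int m - k + 1)))"
proof -
  define Z where "Z = qint s (int l) / s ^ l"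
  note rel = Xq_relations[OF assms, folded Z_def]
  have "Xq s (int l) ^ (m + 1) - Xq s (int l - 1) ^ (m + 1)
      = qint s (2 * int l) * (s ^ l) powi (- 2)
        * (\<Sum>j\<le>m. lucas_coeff (s\<^sup>2) (int m) (int j) * (Z\<^sup>2) ^ j)"
    using power_diff_eq_lucas_poly[OF rel(1,2), of m] Xq_diff[OF assms]
    by (simp add: lucas_poly_def power_int_minus_two_power)
  also have "\<dots> = (\<Sum>k\<in>{0..int m}. (lucas_coeff (s\<^sup>2) (int m) (int m - k) * qint s (2 * int l))
        * qint s (int l) powi (2 * (int m - k)) * s powi (- int l * (2 * (int m - k) + 2)))"
    using sum_reflect_power_int_even[OF assms(1), where A = "qint s (int l)" and m = m and l = l
        and c = 2 and f = "\<lambda>j. lucas_coeff (s\<^sup>2) (int m) j * qint s (2 * int l)"]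
    unfolding Z_def by (simp add: sum_distrib_left ac_simps)
  also have "\<dots> = (\<Sum>k\<in>{0..int m}. hsym (int m - 2 * k) (k + 1) (s\<^sup>2) * qint s (2 * int l)
        * qint s (int l) powi (2 * (int m - k)) * s powi (- 2 * int l * (int m - k + 1)))"
    by (intro sum.cong refl) (simp add: lucas_coeff_def algebra_simps)
  finally show ?thesis .
qed

lemma power_sum_eq_sum_gpol:
  fixes \<alpha> \<beta> :: "'a::field"
  assumes "\<alpha> + \<beta> = (1 + q) * Y" and "\<alpha> * \<beta> = q * Y\<^sup>2 - Y"
  shows "\<alpha> ^ n + \<beta> ^ n = (\<Sum>j\<le>n. gpol (int n) (int j) q * Y ^ j)"
  using lucas_U_combination[where \<alpha> = \<alpha> and \<beta> = \<beta> and a = 1 and b = 1 and n = n,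
      OF assms [symmetric]]
  by (simp add: sum_gpol trans [OF add.commute assms(1)] del: lucas_U.simps)

lemma Xq_power_sum_expansion:
  fixes s :: "'a::field" and m l :: nat
  assumes "s \<noteq> 0" and "s\<^sup>2 \<noteq> 1" and "l \<ge> 1"
  shows "Xq s (int l) ^ m + Xq s (int l - 1) ^ m
    = (\<Sum>k\<in>{0..int m}. gpol (int m) (int m - k) (s\<^sup>2)
        * qint s (int l) powi (2 * (int m - k)) * s powi (- 2 * int l * (int m - k)))"
proof -
  define Z where "Z = qint s (int l) / s ^ l"
  note rel = Xq_relations[OF assms, folded Z_def]
  have "Xq s (int l) ^ m + Xq s (int l - 1) ^ m = (\<Sum>j\<le>m. gpol (int m) (int j) (s\<^sup>2) * (Z\<^sup>2) ^ j)"
    using rel(1,2) by (rule power_sum_eq_sum_gpol)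
  then show ?thesis
    using sum_reflect_power_int_even[OF assms(1), where f = "\<lambda>j. gpol (int m) j (s\<^sup>2)"
        and A = "qint s (int l)" and m = m and l = l and c = 0]
    unfolding Z_def by (simp add: algebra_simps)
qed

lemma Xq_weighted_power_diff_expansion:
  fixes s :: "'a::field" and m l :: nat
  assumes "s \<noteq> 0" and "s\<^sup>2 \<noteq> 1" and "m \<ge> 1" and "l \<ge> 1"
  shows "(1 - s ^ (2 * l + 1)) / ((1 - s) * s ^ l) * Xq s (int l) ^ m
      - (1 - s ^ (2 * l - 1)) / ((1 - s) * s ^ (l - 1)) * Xq s (int l - 1) ^ m
    = (\<Sum>k\<in>{0..int m}. cpol (int m) (int m - k) s * qint s (2 * int l)
        * qint s (int l) powi (2 * (int m - k) - 1) * s powi (- int l * (2 * (int m - k) + 1)))"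
proof -
  define P M Z where "P = Xq s (int l)" and "M = Xq s (int l - 1)" and "Z = qint s (int l) / s ^ l"
  define F\<^sub>1 F\<^sub>0 K where "F\<^sub>1 = (1 - s ^ (2 * l + 1)) / ((1 - s) * s ^ l)"
    and "F\<^sub>0 = (1 - s ^ (2 * l - 1)) / ((1 - s) * s ^ (l - 1))" and "K = (1 + s ^ (2 * l)) / s ^ l"
  note rel = Xq_relations[OF assms(1,2,4), folded P_def M_def Z_def F\<^sub>1_def F\<^sub>0_def K_def]
  let ?U = "lucas_U ((1 + s\<^sup>2) * Z\<^sup>2) (s\<^sup>2 * (Z\<^sup>2)\<^sup>2 - Z\<^sup>2)"
  have "F\<^sub>1 * P ^ m - F\<^sub>0 * M ^ m = K * (?U (Suc m) + s * Z\<^sup>2 * ?U m)"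
    using lucas_U_combination[where \<alpha> = P and \<beta> = M and a = F\<^sub>1 and b = "- F\<^sub>0" and n = m,
        OF rel(1) [symmetric] rel(2) [symmetric]] rel(4,5)
    by (simp add: algebra_simps del: lucas_U.simps)
  also have "\<dots> = K * (\<Sum>j\<le>m. cpol (int m) (int j) s * (Z\<^sup>2) ^ j)"
    by (simp add: sum_cpol)
  also have "\<dots> = K * Z * (\<Sum>j\<le>m. cpol (int m) (int j) s * Z powi (2 * int j - 1))"
    using sum_power_int_odd_times[where f = "\<lambda>j. cpol (int m) j s"] assms(3)
    by (simp add: cpol_def mult.assoc)
  also have "K * Z = qint s (2 * int l) * (s ^ l) powi (- 2)"
    using rel(3) Xq_diff[OF assms(1,2,4), folded P_def M_def]
    by (simp add: power_int_minus_two_power mult.commute)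
  also have "qint s (2 * int l) * (s ^ l) powi (- 2)
        * (\<Sum>j\<le>m. cpol (int m) (int j) s * Z powi (2 * int j - 1))
      = (\<Sum>k\<in>{0..int m}. (cpol (int m) (int m - k) s * qint s (2 * int l))
        * qint s (int l) powi (2 * (int m - k) - 1) * s powi (- int l * (2 * (int m - k) - 1 + 2)))"
    using sum_reflect_power_int_odd[OF assms(1), where A = "qint s (int l)" and m = m and l = l
        and c = 2 and f = "\<lambda>j. cpol (int m) j s * qint s (2 * int l)"]
    unfolding Z_def by (simp add: sum_distrib_left ac_simps)
  also have "\<dots> = (\<Sum>k\<in>{0..int m}. cpol (int m) (int m - k) s * qint s (2 * int l)
        * qint s (int l) powi (2 * (int m - k) - 1) * s powi (- int l * (2 * (int m - k) + 1)))"
    by (intro sum.cong refl) (simp add: algebra_simps)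
  finally show ?thesis
    by (simp only: P_def M_def F\<^sub>1_def F\<^sub>0_def)
qed

lemma Xq_weighted_power_sum_expansion:
  fixes s :: "'a::field" and m l :: nat
  assumes "s \<noteq> 0" and "s\<^sup>2 \<noteq> 1" and "m \<ge> 1" and "l \<ge> 1"
  shows "(1 - s ^ (2 * l + 1)) / ((1 - s) * s ^ l) * Xq s (int l) ^ (m - 1)
      + (1 - s ^ (2 * l - 1)) / ((1 - s) * s ^ (l - 1)) * Xq s (int l - 1) ^ (m - 1)
    = (\<Sum>k\<in>{0..int m}. dpol (int m) (int m - k) s
        * qint s (int l) powi (2 * (int m - k) - 1) * s powi (- int l * (2 * (int m - k) - 1)))"
proof -
  define P M Z where "P = Xq s (int l)" and "M = Xq s (int l - 1)" and "Z = qint s (int l) / s ^ l"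
  define F\<^sub>1 F\<^sub>0 where "F\<^sub>1 = (1 - s ^ (2 * l + 1)) / ((1 - s) * s ^ l)"
    and "F\<^sub>0 = (1 - s ^ (2 * l - 1)) / ((1 - s) * s ^ (l - 1))"
  note rel = Xq_relations[OF assms(1,2,4), folded P_def M_def Z_def F\<^sub>1_def F\<^sub>0_def]
  obtain n where m: "m = Suc n"
    using assms(3) by (cases m) auto
  define D where "D = (\<Sum>j\<le>m. dpol (int m) (int j) s * Z powi (2 * int j - 1))"
  have "Z * D = (\<Sum>j\<le>m. dpol (int m) (int j) s * (Z\<^sup>2) ^ j)"
    unfolding D_def using sum_power_int_odd_times[where f = "\<lambda>j. dpol (int m) j s"] assms(3)
    by (simp add: dpol_def gpol_def)
  also have "\<dots> = (P ^ m + M ^ m) + s * Z\<^sup>2 * (P ^ n + M ^ n)"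
    unfolding m sum_dpol power_sum_eq_sum_gpol [OF rel(1,2)] ..
  also have "\<dots> = Z * (F\<^sub>1 * P ^ n + F\<^sub>0 * M ^ n)"
    by (simp add: m distrib_left mult.assoc [symmetric] rel(6,7)) (simp add: algebra_simps)
  finally have ZD: "Z * D = Z * (F\<^sub>1 * P ^ n + F\<^sub>0 * M ^ n)" .
  have "F\<^sub>1 * P ^ n + F\<^sub>0 * M ^ n = D"
  proof (cases "Z = 0")
    case True
    then have "P = 0" "M = 0" "F\<^sub>1 + F\<^sub>0 = 0"
      using rel(6-8) by simp_all
    moreover have "2 * int j - 1 \<noteq> 0" for j
      by presburger
    then have "D = 0"
      unfolding D_def using True by (intro sum.neutral) simp
    ultimately show ?thesis
      by (cases n) simp_all
  qed (use ZD in simp)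
  moreover have "(\<Sum>k\<in>{0..int m}. dpol (int m) (int m - k) s
        * qint s (int l) powi (2 * (int m - k) - 1) * s powi (- int l * (2 * (int m - k) - 1))) = D"
    using sum_reflect_power_int_odd[OF assms(1), where f = "\<lambda>j. dpol (int m) j s"
        and A = "qint s (int l)" and m = m and l = l and c = 0]
    unfolding Z_def D_def by (simp add: algebra_simps)
  ultimately show ?thesis
    by (simp add: m P_def M_def F\<^sub>1_def F\<^sub>0_def)
qed

theorem lemma2p2:
  fixes s :: "'a::field_char_0" and m l :: nat
  assumes "s \<noteq> 0" and "s \<noteq> 1" and "s^2 \<noteq> 1"
    and "m \<ge> 1" and "l \<ge> 1"
  shows
   "(Xq s (int l) ^ (m+1) - Xq s (int l - 1) ^ (m+1)
      = (\<Sum>k\<in>{0..int m}. hsym (int m - 2*k) (k + 1) (s^2) * qint s (2 * int l)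
            * qint s (int l) powi (2*(int m - k)) * s powi (- 2 * int l * (int m - k + 1)))) \<and>
   ((1 - s^(2*l+1)) / ((1 - s) * s^l) * Xq s (int l) ^ m
      - (1 - s^(2*l-1)) / ((1 - s) * s^(l-1)) * Xq s (int l - 1) ^ m
      = (\<Sum>k\<in>{0..int m}. cpol (int m) (int m - k) s * qint s (2 * int l)
            * qint s (int l) powi (2*(int m - k) - 1) * s powi (- int l * (2*(int m - k) + 1)))) \<and>
   (Xq s (int l) ^ m + Xq s (int l - 1) ^ m
      = (\<Sum>k\<in>{0..int m}. gpol (int m) (int m - k) (s^2)
            * qint s (int l) powi (2*(int m - k)) * s powi (- 2 * int l * (int m - k)))) \<and>
   ((1 - s^(2*l+1)) / ((1 - s) * s^l) * Xq s (int l) ^ (m-1)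
      + (1 - s^(2*l-1)) / ((1 - s) * s^(l-1)) * Xq s (int l - 1) ^ (m-1)
      = (\<Sum>k\<in>{0..int m}. dpol (int m) (int m - k) s
            * qint s (int l) powi (2*(int m - k) - 1) * s powi (- int l * (2*(int m - k) - 1))))"
  using Xq_power_diff_expansion[OF assms(1,3,5)] Xq_weighted_power_diff_expansion[OF assms(1,3,4,5)]
    Xq_power_sum_expansion[OF assms(1,3,5)] Xq_weighted_power_sum_expansion[OF assms(1,3,4,5)]
  by blast

end
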